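(* Let $M_1\in\mathbb{R}^{a\times d}$, $M_2\in\mathbb{R}^{b\times d}$, and let $\Psi_1:\mathbb{R}^s\to\mathbb{R}^{a\times s}$, $\Psi_2:\mathbb{R}^s\to\mathbb{R}^{b\times s}$ be arbitrary functions; set $\Phi_i(w)=\Psi_i(w)w$ for $i=1,2$. Let $X\in\mathbb{R}^d$, $w\in\mathbb{R}^s$, and $$Z_1=M_1X+\Phi_1(w),\qquad Z_2=M_2X+\Phi_2(w).$$ Let $L_1=\sup_{w'\in\mathbb{R}^s}\|\Psi_1(w')\|$, $L_2=\sup_{w'\in\mathbb{R}^s}\|\Psi_2(w')\|$ (assumed finite), and $\alpha=\inf_{w'\in\mathbb{R}^s}\sigma_{\min}\big((I-M_1M_1^+)\Psi_1(w')\big)$. Assume $\mathrm{Null}(M_1)\subseteq\mathrm{Null}(M_2)$. Then: (i) if $w=0$, then $\|Z_2\|\le\sigma_{\max}(M_2M_1^+)\|Z_1\|$; (ii) if $\alpha>0$, then $\|Z_2\|\le\big((1+L_1/\alpha)\,\sigma_{\max}(M_2M_1^+)+L_2/\alpha\big)\|Z_1\|$.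
   Context: $\|\cdot\|$ is the Euclidean norm on vectors and the induced operator (spectral) norm on matrices. For a matrix $M$, $\sigma_{\max}(M)=\max_{\|x\|=1}\|Mx\|$, $\sigma_{\min}(M)=\min_{\|x\|=1}\|Mx\|$ (which is zero if $M$ does not have full column rank), and $M^+$ is the Moore–Penrose pseudo-inverse. *)

theory Defs
  imports "HOL-Analysis.Analysis"
begin

definition is_mp_pinv :: "real^'n^'m \<Rightarrow> real^'m^'n \<Rightarrow> bool" where
  "is_mp_pinv A P \<longleftrightarrow> A ** P ** A = A \<and> P ** A ** P = P \<and>
     transpose (A ** P) = A ** P \<and> transpose (P ** A) = P ** A"

definition mp_pinv :: "real^'n^'m \<Rightarrow> real^'m^'n" where
  "mp_pinv A = (THE P. is_mp_pinv A P)"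

text \<open>Largest singular value = induced (spectral) operator norm.\<close>
definition sigma_max :: "real^'n^'m \<Rightarrow> real" where
  "sigma_max A = onorm (\<lambda>x. A *v x)"

definition sigma_min :: "real^'n^'m \<Rightarrow> real" where
  "sigma_min A = Inf ((\<lambda>x. norm (A *v x)) ` {x. norm x = 1})"

end

theory Submission
  imports Defs
begin

text \<open>Since \<open>Null(M1) \<subseteq> Null(M2)\<close>, the matrix \<open>M2\<close> factors as \<open>(M2 M1\<^sup>+) M1\<close>, so
  \<open>Z2 = M2 M1\<^sup>+ (Z1 - \<Phi>1(w)) + \<Phi>2(w)\<close>; for \<open>w = 0\<close> this is (i). For (ii), the residual
  projector \<open>I - M1 M1\<^sup>+\<close> is symmetric and idempotent, hence a contraction, and it annihilates
  \<open>M1 X\<close>; therefore \<open>\<alpha> \<parallel>w\<parallel> \<le> \<parallel>(I - M1 M1\<^sup>+) \<Psi>1(w) w\<parallel> \<le> \<parallel>Z1\<parallel>\<close>, and the triangle inequality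
  gives the bound. The pseudo-inverse itself exists as (projection onto the row space) \<open>\<circ>\<close>
  (a linear right inverse) \<open>\<circ>\<close> (projection onto the column space).\<close>

lemma orthogonal_projection_self_adjoint:
  fixes p :: "'a::real_inner \<Rightarrow> 'a"
  assumes "\<And>x. p x \<in> S" and "\<And>x s. s \<in> S \<Longrightarrow> orthogonal (x - p x) s"
  shows "p x \<bullet> y = x \<bullet> p y"
proof -
  have "p x \<bullet> y = p x \<bullet> p y + p x \<bullet> (y - p y)" by (simp add: inner_diff_right)
  also have "\<dots> = p x \<bullet> p y" using assms by (simp add: orthogonal_def inner_commute)
  also have "\<dots> = x \<bullet> p y - (x - p x) \<bullet> p y" by (simp add: inner_diff_left)
  also have "\<dots> = x \<bullet> p y" using assms by (simp add: orthogonal_def)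
  finally show ?thesis .
qed

lemma self_adjoint_imp_linear:
  fixes f :: "'a::real_inner \<Rightarrow> 'a"
  assumes "\<And>x y. f x \<bullet> y = x \<bullet> f y"
  shows "linear f"
proof (rule linearI)
  show "f (x + y) = f x + f y" for x y
    by (subst vector_eq_rdot[symmetric]) (simp add: assms inner_add_left)
  show "f (c *\<^sub>R x) = c *\<^sub>R f x" for c x
    by (subst vector_eq_rdot[symmetric]) (simp add: assms)
qed

lemma orthogonal_projection_exists:
  fixes S :: "'a::euclidean_space set"
  assumes "subspace S"
  obtains p where "linear p" "\<And>x. p x \<in> S" "\<And>x s. s \<in> S \<Longrightarrow> orthogonal (x - p x) s"
    "\<And>s. s \<in> S \<Longrightarrow> p s = s"
proof -
  have span_S: "span S = S"
    using assms by simp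
  have "\<exists>y \<in> S. \<forall>s \<in> S. orthogonal (x - y) s" for x
  proof -
    obtain y z where "y \<in> S" "\<And>s. s \<in> S \<Longrightarrow> orthogonal z s" "x = y + z"
      using orthogonal_subspace_decomp_exists[of S x] unfolding span_S by blast
    then show ?thesis by (auto intro!: bexI[of _ y])
  qed
  then obtain p where p: "\<And>x. p x \<in> S" "\<And>x s. s \<in> S \<Longrightarrow> orthogonal (x - p x) s"
    by metis
  have "linear p"
    by (rule self_adjoint_imp_linear, rule orthogonal_projection_self_adjoint[of p S, OF p])
  moreover have "p s = s" if "s \<in> S" for s
  proof -
    have "s - p s \<in> S" using assms p(1) that by (simp add: subspace_diff)
    then have "orthogonal (s - p s) (s - p s)" using p(2) by blast
    then show ?thesis by (simp add: orthogonal_self)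
  qed
  ultimately show thesis using p that by blast
qed

lemma transpose_eq_if_self_adjoint:
  fixes M :: "real^'n^'n"
  assumes "\<And>x y. (M *v x) \<bullet> y = x \<bullet> (M *v y)"
  shows "transpose M = M"
proof -
  have "(\<lambda>x. transpose M *v x) = (\<lambda>x. M *v x)"
    using adjoint_matrix[of M] adjoint_unique[of "\<lambda>x. M *v x"] assms by simp
  then show ?thesis by (metis matrix_eq)
qed

lemma matrix_vector_mult_eq_0_if_orthogonal_rows:
  fixes A :: "real^'n^'m"
  assumes "\<And>r. r \<in> rows A \<Longrightarrow> orthogonal x r"
  shows "A *v x = 0"
proof -
  have "row i A \<bullet> x = 0" for i
    using assms[of "row i A"] by (auto simp: rows_def orthogonal_def inner_commute)
  then show ?thesis by (simp add: vec_eq_iff matrix_mult_dot row_def)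
qed

lemma is_mp_pinv_exists: "\<exists>P. is_mp_pinv (A :: real^'n^'m) P"
proof -
  obtain pC where pC: "linear pC" "\<And>y. pC y \<in> range ((*v) A)"
    "\<And>y s. s \<in> range ((*v) A) \<Longrightarrow> orthogonal (y - pC y) s" "\<And>s. s \<in> range ((*v) A) \<Longrightarrow> pC s = s"
    using orthogonal_projection_exists[OF linear_subspace_image[OF matrix_vector_mul_linear[of A] subspace_UNIV]]
    by metis
  obtain q where q: "linear q" "\<And>x. q x \<in> span (rows A)"
    "\<And>x s. s \<in> span (rows A) \<Longrightarrow> orthogonal (x - q x) s"
    using orthogonal_projection_exists[OF subspace_span[of "rows A"]] by metis
  obtain g where g: "linear g" "\<And>x. A *v g (A *v x) = A *v x"
    using linear_exists_right_inverse_on[OF matrix_vector_mul_linear subspace_UNIV] by auto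
  have A_q: "A *v q x = A *v x" for x
  proof -
    have "A *v (x - q x) = 0"
      using q(3) by (intro matrix_vector_mult_eq_0_if_orthogonal_rows) (simp add: span_base)
    then show ?thesis by (simp add: matrix_vector_mult_diff_distrib)
  qed
  have pC_pC: "pC (pC y) = pC y" for y
    by (rule pC(4)[OF pC(2)])
  have A_g_pC: "A *v g (pC y) = pC y" for y
  proof -
    obtain x where "pC y = A *v x" using pC(2)[of y] by blast
    then show ?thesis by (simp add: g(2))
  qed
  define P where "P = matrix (q \<circ> g \<circ> pC)"
  have P: "P *v y = q (g (pC y))" for y
    using pC(1) q(1) g(1) by (simp add: P_def matrix_works linear_compose)
  have AP: "A *v (P *v y) = pC y" for y
    by (simp add: P A_q A_g_pC)
  have PA: "P *v (A *v x) = q (g (A *v x))" for x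
    by (simp add: P pC(4))
  have PA_orth: "orthogonal (x - q (g (A *v x))) s" if "s \<in> span (rows A)" for x s
  proof -
    have "orthogonal (x - g (A *v x)) s"
      using g(2) orthogonal_nullspace_rowspace[OF _ that]
      by (simp add: matrix_vector_mult_diff_distrib)
    then show ?thesis using q(3)[OF that, of "g (A *v x)"]
      by (simp add: orthogonal_def inner_diff_left)
  qed
  have "A ** P ** A = A"
    by (simp add: matrix_eq AP pC(4) flip: matrix_vector_mul_assoc)
  moreover have "P ** A ** P = P"
    by (simp add: matrix_eq AP flip: matrix_vector_mul_assoc) (simp add: P pC_pC)
  moreover have "transpose (A ** P) = A ** P"
    by (rule transpose_eq_if_self_adjoint)
      (simp add: AP orthogonal_projection_self_adjoint[OF pC(2,3)] flip: matrix_vector_mul_assoc)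
  moreover have "transpose (P ** A) = P ** A"
    by (rule transpose_eq_if_self_adjoint)
      (simp add: PA orthogonal_projection_self_adjoint[OF q(2) PA_orth] flip: matrix_vector_mul_assoc)
  ultimately show ?thesis unfolding is_mp_pinv_def by blast
qed

lemma is_mp_pinv_unique:
  assumes "is_mp_pinv A P" "is_mp_pinv A Q"
  shows "P = Q"
proof -
  have a: "A ** P ** A = A" "P ** A ** P = P" "transpose (A ** P) = A ** P" "transpose (P ** A) = P ** A"
    and b: "A ** Q ** A = A" "Q ** A ** Q = Q" "transpose (A ** Q) = A ** Q" "transpose (Q ** A) = Q ** A"
    using assms unfolding is_mp_pinv_def by auto
  have "P = P ** transpose (A ** P)" using a by (simp add: matrix_mul_assoc)
  also have "\<dots> = P ** transpose P ** transpose (A ** Q ** A)"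
    using b by (simp add: matrix_transpose_mul matrix_mul_assoc)
  also have "\<dots> = P ** transpose (A ** P) ** transpose (A ** Q)"
    by (simp add: matrix_transpose_mul matrix_mul_assoc)
  also have "\<dots> = P ** A ** Q" using a b by (simp add: matrix_mul_assoc)
  finally have P_eq: "P = P ** A ** Q" .
  have "Q = transpose (Q ** A) ** Q" using b by (simp add: matrix_mul_assoc)
  also have "\<dots> = transpose (A ** P ** A) ** transpose Q ** Q"
    using a by (simp add: matrix_transpose_mul matrix_mul_assoc)
  also have "\<dots> = transpose (P ** A) ** transpose (Q ** A) ** Q"
    by (simp add: matrix_transpose_mul matrix_mul_assoc)
  also have "\<dots> = P ** A ** Q" using a b by (metis matrix_mul_assoc)
  finally show ?thesis using P_eq by simp
qed

lemma is_mp_pinv_mp_pinv: "is_mp_pinv A (mp_pinv A)"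
  unfolding mp_pinv_def using is_mp_pinv_exists[of A] is_mp_pinv_unique[of A] by (metis theI)

lemma is_mp_pinv_apply:
  assumes "is_mp_pinv A P"
  shows "A *v (P *v (A *v x)) = A *v x"
  using assms by (simp add: is_mp_pinv_def matrix_vector_mul_assoc matrix_mul_assoc[symmetric])

lemma is_mp_pinv_factor:
  assumes "is_mp_pinv A P" and "{x. A *v x = 0} \<subseteq> {x. B *v x = 0}"
  shows "B ** P ** A = B"
proof -
  have "A *v (x - P *v (A *v x)) = 0" for x
    using is_mp_pinv_apply[OF assms(1)] by (simp add: matrix_vector_mult_diff_distrib)
  then have "B *v (x - P *v (A *v x)) = 0" for x
    using assms(2) by blast
  then show ?thesis
    by (simp add: matrix_eq matrix_vector_mult_diff_distrib flip: matrix_vector_mul_assoc)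
qed

lemma symmetric_idempotent_norm_le:
  fixes E :: "real^'n^'n"
  assumes "transpose E = E" and "E ** E = E"
  shows "norm (E *v z) \<le> norm z"
proof -
  have "(norm (E *v z))\<^sup>2 = z \<bullet> (transpose E *v (E *v z))"
    by (simp add: power2_norm_eq_inner dot_lmul_matrix[symmetric] inner_commute)
  also have "\<dots> = z \<bullet> (E *v z)" using assms by (simp add: matrix_vector_mul_assoc)
  also have "\<dots> \<le> norm z * norm (E *v z)" by (rule norm_cauchy_schwarz)
  finally show ?thesis by (cases "E *v z = 0") (auto simp: power2_eq_square)
qed

lemma mp_residual_norm_le:
  assumes "is_mp_pinv A P"
  shows "norm ((mat 1 - A ** P) *v z) \<le> norm z"
proof (rule symmetric_idempotent_norm_le)
  have "transpose (mat 1 - A ** P) = mat 1 - transpose (A ** P)"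
    by (simp add: transpose_def mat_def vec_eq_iff)
  then show "transpose (mat 1 - A ** P) = mat 1 - A ** P"
    using assms by (simp add: is_mp_pinv_def)
  show "(mat 1 - A ** P) ** (mat 1 - A ** P) = mat 1 - A ** P"
    using is_mp_pinv_apply[OF assms]
    by (simp add: matrix_eq matrix_vector_mult_diff_rdistrib matrix_vector_mult_diff_distrib
        flip: matrix_vector_mul_assoc)
qed

lemma norm_le_sigma_max: "norm (A *v x) \<le> sigma_max A * norm x"
  unfolding sigma_max_def by (rule onorm[OF matrix_vector_mul_bounded_linear])

lemma sigma_max_nonneg: "0 \<le> sigma_max A"
  unfolding sigma_max_def by (rule onorm_pos_le[OF matrix_vector_mul_bounded_linear])

lemma sigma_min_nonneg: "0 \<le> sigma_min A"
  unfolding sigma_min_def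
proof (rule cInf_greatest)
  show "(\<lambda>x. norm (A *v x)) ` {x. norm x = 1} \<noteq> {}"
    using norm_axis_1 by blast
qed auto

lemma sigma_min_mult_norm_le: "sigma_min A * norm x \<le> norm (A *v x)"
proof (cases "x = 0")
  case False
  then have "sigma_min A \<le> norm (A *v (x /\<^sub>R norm x))"
    unfolding sigma_min_def by (intro cInf_lower bdd_belowI[where m = 0]) auto
  also have "\<dots> = norm (A *v x) / norm x"
    by (simp add: matrix_vector_mult_scaleR divide_inverse_commute)
  finally show ?thesis using False by (simp add: pos_le_divide_eq)
qed simp

lemma norm_le_SUP_sigma_max:
  assumes "bdd_above (range (\<lambda>w. sigma_max (Psi w)))"
  shows "norm (Psi w *v x) \<le> (SUP w. sigma_max (Psi w)) * norm x"
  using norm_le_sigma_max mult_right_mono[OF cSUP_upper[OF UNIV_I assms] norm_ge_zero]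
  by (rule order_trans)

lemma SUP_sigma_max_nonneg:
  assumes "bdd_above (range (\<lambda>w. sigma_max (Psi w)))"
  shows "0 \<le> (SUP w. sigma_max (Psi w))"
  using order_trans[OF sigma_max_nonneg cSUP_upper[OF UNIV_I assms]] by blast

lemma INF_sigma_min_le:
  "(INF w. sigma_min (Psi w)) \<le> sigma_min (Psi w)"
  by (rule cINF_lower) (auto intro: bdd_belowI[where m = 0] sigma_min_nonneg)

lemma sigma_min_mp_residual_mult_norm_le:
  assumes "is_mp_pinv A P"
  shows "sigma_min ((mat 1 - A ** P) ** B) * norm w \<le> norm (A *v x + B *v w)"
proof -
  have "(mat 1 - A ** P) *v (A *v x) = 0"
    using is_mp_pinv_apply[OF assms]
    by (simp add: matrix_vector_mult_diff_rdistrib flip: matrix_vector_mul_assoc)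
  then have "(mat 1 - A ** P) *v (A *v x + B *v w) = ((mat 1 - A ** P) ** B) *v w"
    by (simp add: matrix_vector_right_distrib matrix_vector_mul_assoc)
  then show ?thesis
    using sigma_min_mult_norm_le mp_residual_norm_le[OF assms] by (metis order_trans)
qed

lemma norm_perturbed_matrix_vector_le:
  assumes "norm u \<le> L1 * r" "norm v \<le> L2 * r" "\<alpha> * r \<le> norm z"
    and "\<alpha> > 0" "0 \<le> L1" "0 \<le> L2"
  shows "norm (S *v (z - u) + v) \<le> ((1 + L1 / \<alpha>) * sigma_max S + L2 / \<alpha>) * norm z"
proof -
  have r: "r \<le> norm z / \<alpha>" using assms(3,4) by (simp add: pos_le_divide_eq mult.commute)
  have "norm (S *v (z - u) + v) \<le> sigma_max S * (norm z + norm u) + norm v"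
    using norm_le_sigma_max[of S "z - u"] norm_triangle_ineq4[of z u] sigma_max_nonneg[of S]
    by (smt (verit) mult_left_mono norm_triangle_ineq)
  also have "\<dots> \<le> sigma_max S * norm z + (sigma_max S * L1 + L2) * r"
    using assms(1,2) sigma_max_nonneg[of S] mult_left_mono[OF assms(1), of "sigma_max S"]
    by (simp add: algebra_simps)
  also have "\<dots> \<le> sigma_max S * norm z + (sigma_max S * L1 + L2) * (norm z / \<alpha>)"
    using r assms(5,6) sigma_max_nonneg[of S] by (intro add_left_mono mult_left_mono) auto
  also have "\<dots> = ((1 + L1 / \<alpha>) * sigma_max S + L2 / \<alpha>) * norm z"
    by (simp add: algebra_simps)
  finally show ?thesis .
qed

theorem lemma3:
  fixes M1 :: "real^'d^'a" and M2 :: "real^'d^'b"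
    and Psi1 :: "real^'s \<Rightarrow> real^'s^'a" and Psi2 :: "real^'s \<Rightarrow> real^'s^'b"
    and X :: "real^'d" and w :: "real^'s"
    and Z1 :: "real^'a" and Z2 :: "real^'b" and L1 L2 \<alpha> :: real
  defines "Z1 \<equiv> M1 *v X + Psi1 w *v w"
    and "Z2 \<equiv> M2 *v X + Psi2 w *v w"
    and "L1 \<equiv> (SUP w'. sigma_max (Psi1 w'))"
    and "L2 \<equiv> (SUP w'. sigma_max (Psi2 w'))"
    and "\<alpha> \<equiv> (INF w'. sigma_min ((mat 1 - M1 ** mp_pinv M1) ** Psi1 w'))"
  assumes L1_fin: "bdd_above (range (\<lambda>w'. sigma_max (Psi1 w')))"
    and L2_fin: "bdd_above (range (\<lambda>w'. sigma_max (Psi2 w')))"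
    and null: "{x. M1 *v x = 0} \<subseteq> {x. M2 *v x = 0}"
  shows "(w = 0 \<longrightarrow> norm Z2 \<le> sigma_max (M2 ** mp_pinv M1) * norm Z1) \<and>
         (\<alpha> > 0 \<longrightarrow> norm Z2 \<le> ((1 + L1 / \<alpha>) * sigma_max (M2 ** mp_pinv M1) + L2 / \<alpha>) * norm Z1)"
proof (intro conjI impI)
  let ?P = "mp_pinv M1"
  have Z2_eq: "Z2 = (M2 ** ?P) *v (Z1 - Psi1 w *v w) + Psi2 w *v w"
    using is_mp_pinv_factor[OF is_mp_pinv_mp_pinv null]
    by (simp add: Z1_def Z2_def matrix_vector_mul_assoc)
  show "norm Z2 \<le> sigma_max (M2 ** ?P) * norm Z1" if "w = 0"
    using Z2_eq that by (simp add: norm_le_sigma_max)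
  assume "\<alpha> > 0"
  have w_bound: "\<alpha> * norm w \<le> norm Z1"
    unfolding Z1_def \<alpha>_def
    by (rule order_trans[OF mult_right_mono[OF INF_sigma_min_le[of _ w] norm_ge_zero]
          sigma_min_mp_residual_mult_norm_le[OF is_mp_pinv_mp_pinv]])
  show "norm Z2 \<le> ((1 + L1 / \<alpha>) * sigma_max (M2 ** ?P) + L2 / \<alpha>) * norm Z1"
    unfolding Z2_eq L1_def L2_def
    using norm_le_SUP_sigma_max[OF L1_fin] norm_le_SUP_sigma_max[OF L2_fin] w_bound \<open>\<alpha> > 0\<close>
      SUP_sigma_max_nonneg[OF L1_fin] SUP_sigma_max_nonneg[OF L2_fin]
    by (rule norm_perturbed_matrix_vector_le)
qed

end
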